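(* Let $\mu_1,\mu_2$ be probability measures on $\mathbb{R}$ with characteristic functions $\varphi_j(u)=\int e^{iux}\mu_j(dx)$ and moment generating functions $\phi_j(v)=\int e^{vx}\mu_j(dx)$, $j=1,2$. Assume there is $\lambda>0$ with $\phi_1(\lambda)<\infty$ and $\phi_2(\lambda)<\infty$, and there is an open interval $I$ such that $\varphi_1(u)=\varphi_2(u)$ for all $u\in I$. Then $\mu_1=\mu_2$. *)

theory Defs
  imports "HOL-Probability.Probability"
begin

end

theory Submission
  imports Defs "HOL-Complex_Analysis.Complex_Analysis"
begin

text \<open>
  The exponential moment makes \<open>F(z) = \<integral> exp (i z x) dM(x)\<close> well defined and continuous
  on the closed strip \<open>-l \<le> Im z \<le> 0\<close> and holomorphic inside it, with \<open>F\<close> equal to the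
  characteristic function on the real axis. The difference \<open>G = F\<^sub>1 - F\<^sub>2\<close> vanishes on
  the boundary segment \<open>(a,b)\<close>; gluing \<open>G\<close> to \<open>0\<close> across that segment gives a holomorphic
  function on a rectangle which vanishes on its upper half, hence everywhere. So \<open>G\<close>
  vanishes on an open subset of the strip, hence on the whole strip and, by continuity, on
  the real axis. Thus the characteristic functions agree and Levy's uniqueness theorem applies.
\<close>

lemma continuous_on_integral_dominated:
  fixes f :: "'a::metric_space \<Rightarrow> 'b \<Rightarrow> 'c::{banach, second_countable_topology}"
  assumes meas: "\<And>z. z \<in> S \<Longrightarrow> f z \<in> borel_measurable M"
    and cont: "\<And>x. x \<in> space M \<Longrightarrow> continuous_on S (\<lambda>z. f z x)"
    and w: "integrable M w"
    and bound: "\<And>z x. z \<in> S \<Longrightarrow> x \<in> space M \<Longrightarrow> norm (f z x) \<le> w x"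
  shows "continuous_on S (\<lambda>z. LINT x|M. f z x)"
proof (rule continuous_on_sequentiallyI)
  fix u a assume u: "\<forall>n. u n \<in> S" "a \<in> S" "u \<longlonglongrightarrow> a"
  show "(\<lambda>n. LINT x|M. f (u n) x) \<longlonglongrightarrow> (LINT x|M. f a x)"
  proof (rule integral_dominated_convergence[OF _ _ w])
    show "AE x in M. (\<lambda>n. f (u n) x) \<longlonglongrightarrow> f a x"
      using u by (intro AE_I2 continuous_on_tendsto_compose[OF cont]) auto
  qed (use u meas bound in auto)
qed

lemma has_field_derivative_integral_dominated:
  fixes f :: "'a::{real_normed_field, banach, second_countable_topology} \<Rightarrow> 'b \<Rightarrow> 'a"
  assumes int: "\<And>z. z \<in> ball z0 d \<Longrightarrow> integrable M (f z)"
    and deriv: "\<And>x. x \<in> space M \<Longrightarrow> ((\<lambda>z. f z x) has_field_derivative f' x) (at z0)"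
    and f': "f' \<in> borel_measurable M"
    and w: "integrable M w"
    and bound: "\<And>z x. z \<in> ball z0 d \<Longrightarrow> z \<noteq> z0 \<Longrightarrow> x \<in> space M \<Longrightarrow>
                   norm ((f z x - f z0 x) / (z - z0)) \<le> w x"
    and "0 < d"
  shows "((\<lambda>z. LINT x|M. f z x) has_field_derivative (LINT x|M. f' x)) (at z0)"
proof -
  have z0: "z0 \<in> ball z0 d"
    using \<open>0 < d\<close> by simp
  have "((\<lambda>z. ((LINT x|M. f z x) - (LINT x|M. f z0 x)) / (z - z0)) \<longlongrightarrow> (LINT x|M. f' x))
          (at z0 within ball z0 d)"
    unfolding tendsto_at_iff_sequentially comp_def
  proof (intro allI impI)
    fix u assume u: "\<forall>n. u n \<in> ball z0 d - {z0}" "u \<longlonglongrightarrow> z0"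
    have "(\<lambda>n. LINT x|M. (f (u n) x - f z0 x) / (u n - z0)) \<longlonglongrightarrow> (LINT x|M. f' x)"
    proof (rule integral_dominated_convergence[OF f' _ w])
      show "AE x in M. (\<lambda>n. (f (u n) x - f z0 x) / (u n - z0)) \<longlonglongrightarrow> f' x"
      proof (rule AE_I2)
        fix x assume "x \<in> space M"
        then have "((\<lambda>z. (f z x - f z0 x) / (z - z0)) \<longlongrightarrow> f' x) (at z0)"
          using deriv unfolding has_field_derivative_iff by blast
        then show "(\<lambda>n. (f (u n) x - f z0 x) / (u n - z0)) \<longlonglongrightarrow> f' x"
          using u unfolding tendsto_at_iff_sequentially comp_def by blast
      qed
    qed (use u int z0 bound in \<open>auto intro!: AE_I2\<close>)
    moreover have "(LINT x|M. (f (u n) x - f z0 x) / (u n - z0))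
                     = ((LINT x|M. f (u n) x) - (LINT x|M. f z0 x)) / (u n - z0)" for n
      using u int z0 by (simp add: integral_diff)
    ultimately show "(\<lambda>n. ((LINT x|M. f (u n) x) - (LINT x|M. f z0 x)) / (u n - z0))
                       \<longlonglongrightarrow> (LINT x|M. f' x)"
      by (simp only:)
  qed
  then show ?thesis
    by (simp add: has_field_derivative_iff at_within_open[OF z0])
qed

lemma norm_exp_i_mult: "norm (exp (\<i> * z * complex_of_real x)) = exp (- Im z * x)"
  by simp

lemma exp_mult_le_one_plus_exp:
  fixes v l x :: real
  assumes "0 \<le> v" "v \<le> l"
  shows "exp (v * x) \<le> 1 + exp (l * x)"
proof (cases "x \<ge> 0")
  case True
  then have "exp (v * x) \<le> exp (l * x)"
    using assms by (simp add: mult_right_mono)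
  then show ?thesis by linarith
next
  case False
  then have "exp (v * x) \<le> 1"
    using assms by (simp add: mult_nonneg_nonpos)
  then show ?thesis
    using exp_gt_zero[of "l * x"] by linarith
qed

lemma norm_exp_minus_one_le:
  fixes w :: "'a::{banach, real_normed_field}"
  shows "norm (exp w - 1) \<le> norm w * exp (norm w)"
  using Taylor_exp_field[of w 0] by (simp add: mult.commute)

lemma norm_exp_i_difference_quotient_le:
  fixes y z :: complex and x d :: real
  assumes "norm (y - z) \<le> d" "y \<noteq> z"
  shows "norm ((exp (\<i> * y * x) - exp (\<i> * z * x)) / (y - z))
           \<le> (exp ((2 * d - Im z) * x) + exp ((- 2 * d - Im z) * x)) / d"
proof -
  have "0 < norm (y - z)"
    using assms(2) by simp
  with assms(1) have d: "0 < d"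
    by linarith
  have "norm (exp (\<i> * (y - z) * x) - 1) \<le> norm (y - z) * \<bar>x\<bar> * exp (norm (y - z) * \<bar>x\<bar>)"
    using norm_exp_minus_one_le[of "\<i> * (y - z) * x"] by (simp add: norm_mult)
  also have "\<dots> \<le> norm (y - z) * (\<bar>x\<bar> * exp (d * \<bar>x\<bar>))"
    using assms(1) by (simp add: mult.assoc mult_left_mono mult_right_mono)
  also have "\<bar>x\<bar> * exp (d * \<bar>x\<bar>) \<le> exp (2 * d * \<bar>x\<bar>) / d"
  proof -
    have "d * \<bar>x\<bar> \<le> exp (d * \<bar>x\<bar>)"
      using exp_ge_add_one_self[of "d * \<bar>x\<bar>"] by linarith
    then have "d * (\<bar>x\<bar> * exp (d * \<bar>x\<bar>)) \<le> exp (d * \<bar>x\<bar>) * exp (d * \<bar>x\<bar>)"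
      by (simp add: mult.assoc[symmetric] mult_right_mono)
    then show ?thesis
      using d by (simp add: field_simps flip: exp_add)
  qed
  finally have quotient: "norm (exp (\<i> * (y - z) * x) - 1) / norm (y - z) \<le> exp (2 * d * \<bar>x\<bar>) / d"
    using assms(2) by (simp add: divide_le_eq mult.commute)
  have "exp (\<i> * y * x) - exp (\<i> * z * x) = exp (\<i> * z * x) * (exp (\<i> * (y - z) * x) - 1)"
    by (simp add: algebra_simps flip: exp_add)
  then have "norm ((exp (\<i> * y * x) - exp (\<i> * z * x)) / (y - z))
               = exp (- Im z * x) * (norm (exp (\<i> * (y - z) * x) - 1) / norm (y - z))"
    by (simp add: norm_mult norm_divide norm_exp_i_mult)
  also have "\<dots> \<le> exp (- Im z * x) * (exp (2 * d * \<bar>x\<bar>) / d)"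
    using quotient by (intro mult_left_mono) auto
  also have "\<dots> = exp (2 * d * \<bar>x\<bar> - Im z * x) / d"
    by (simp add: exp_add[symmetric])
  also have "\<dots> \<le> (exp ((2 * d - Im z) * x) + exp ((- 2 * d - Im z) * x)) / d"
    using d by (cases "x \<ge> 0") (simp_all add: divide_right_mono algebra_simps add_increasing2 add_increasing)
  finally show ?thesis .
qed

definition fourier_laplace :: "real measure \<Rightarrow> complex \<Rightarrow> complex" where
  "fourier_laplace M z = (CLINT x|M. exp (\<i> * z * complex_of_real x))"

lemma fourier_laplace_of_real: "fourier_laplace M (complex_of_real u) = char M u"
  by (simp add: fourier_laplace_def char_def mult.assoc)

locale exp_moment_distribution = real_distribution M for M :: "real measure" +
  fixes l :: real
  assumes nn_integral_exp_finite: "(\<integral>\<^sup>+ x. ennreal (exp (l * x)) \<partial>M) < \<infinity>"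
begin

lemma integrable_one_plus_exp: "integrable M (\<lambda>x. 1 + exp (l * x))"
proof -
  have "integrable M (\<lambda>x. exp (l * x))"
    using nn_integral_exp_finite by (intro integrableI_nonneg) auto
  then show ?thesis
    by simp
qed

lemma integrable_exp_mult:
  assumes "0 \<le> v" "v \<le> l"
  shows "integrable M (\<lambda>x. exp (v * x))"
  using integrable_one_plus_exp
  by (rule Bochner_Integration.integrable_bound) (use exp_mult_le_one_plus_exp[OF assms] in auto)

lemma continuous_on_fourier_laplace:
  "continuous_on {z. -l \<le> Im z \<and> Im z \<le> 0} (fourier_laplace M)"
  unfolding fourier_laplace_def
proof (rule continuous_on_integral_dominated[OF _ _ integrable_one_plus_exp])
  show "norm (exp (\<i> * z * complex_of_real x)) \<le> 1 + exp (l * x)"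
    if "z \<in> {z. -l \<le> Im z \<and> Im z \<le> 0}" for z x
    using that unfolding norm_exp_i_mult by (intro exp_mult_le_one_plus_exp) auto
qed (auto intro!: continuous_intros)

lemma has_field_derivative_fourier_laplace:
  assumes "-l < Im z" "Im z < 0"
  shows "(fourier_laplace M has_field_derivative (CLINT x|M. \<i> * x * exp (\<i> * z * x))) (at z)"
proof -
  \<comment> \<open>small enough that the exponents \<open>- Im z \<plusminus> 2 d\<close> of the dominating function stay in \<open>[0, l]\<close>\<close>
  define d where "d = min (- Im z) (l + Im z) / 2"
  have d: "0 < d" "0 \<le> - 2 * d - Im z" "2 * d - Im z \<le> l"
    using assms by (auto simp: d_def)
  have w: "integrable M (\<lambda>x. (exp ((2 * d - Im z) * x) + exp ((- 2 * d - Im z) * x)) / d)"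
    using integrable_exp_mult[of "2 * d - Im z"] integrable_exp_mult[of "- 2 * d - Im z"] d by simp
  have Im_ball: "-l \<le> Im y \<and> Im y \<le> 0" if "y \<in> ball z d" for y
  proof -
    have "\<bar>Im y - Im z\<bar> < d"
      using that abs_Im_le_cmod[of "y - z"] by (simp add: dist_norm norm_minus_commute)
    then show ?thesis
      using d by auto
  qed
  show ?thesis
    unfolding fourier_laplace_def
  proof (rule has_field_derivative_integral_dominated
      [OF _ _ _ w _ \<open>0 < d\<close>])
    show "integrable M (\<lambda>x. exp (\<i> * y * complex_of_real x))" if "y \<in> ball z d" for y
    proof (rule Bochner_Integration.integrable_bound[OF integrable_exp_mult[of "- Im y"]])
      show "0 \<le> - Im y" "- Im y \<le> l"
        using Im_ball[OF that] by auto
    qed (simp_all add: norm_exp_i_mult)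
    show "((\<lambda>y. exp (\<i> * y * complex_of_real x)) has_field_derivative \<i> * x * exp (\<i> * z * x)) (at z)" for x
      by (auto intro!: derivative_eq_intros simp: algebra_simps)
    show "norm ((exp (\<i> * y * complex_of_real x) - exp (\<i> * z * complex_of_real x)) / (y - z))
            \<le> (exp ((2 * d - Im z) * x) + exp ((- 2 * d - Im z) * x)) / d"
      if "y \<in> ball z d" "y \<noteq> z" for y x
    proof (rule norm_exp_i_difference_quotient_le[OF _ \<open>y \<noteq> z\<close>])
      show "norm (y - z) \<le> d"
        using that by (simp add: dist_norm norm_minus_commute)
    qed
  qed simp
qed

lemma holomorphic_on_fourier_laplace:
  "fourier_laplace M holomorphic_on {z. -l < Im z \<and> Im z < 0}"
proof -
  have "open {z. -l < Im z \<and> Im z < 0}"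
    by (intro open_Collect_conj open_Collect_less continuous_intros)
  with has_field_derivative_fourier_laplace show ?thesis
    by (auto simp: holomorphic_on_open)
qed

end

lemma zero_on_strip_if_zero_on_edge_segment:
  fixes G :: "complex \<Rightarrow> complex" and a b c :: real
  assumes cont: "continuous_on {z. c \<le> Im z \<and> Im z \<le> 0} G"
    and hol: "G holomorphic_on {z. c < Im z \<and> Im z < 0}"
    and zero: "\<And>u. u \<in> {a<..<b} \<Longrightarrow> G (complex_of_real u) = 0"
    and "a < b" and z: "c < Im z" "Im z < 0"
  shows "G z = 0"
proof -
  define R where "R = {z. a < Re z \<and> Re z < b \<and> c < Im z \<and> Im z < - c}"
  define f where "f z = (if Im z \<le> 0 then G z else 0)" for z
  have "open R"
    unfolding R_def by (intro open_Collect_conj open_Collect_less continuous_intros)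
  have "convex R"
  proof -
    have "R = {z. a < Re z} \<inter> {z. Re z < b} \<inter> {z. c < Im z} \<inter> {z. Im z < - c}"
      by (auto simp: R_def)
    then show ?thesis
      by (simp add: convex_Int convex_halfspace_Re_gt convex_halfspace_Re_lt
                    convex_halfspace_Im_gt convex_halfspace_Im_lt)
  qed
  have below: "Complex ((a + b) / 2) (c / 2) \<in> R \<inter> {z. Im z < 0}"
    and above: "Complex ((a + b) / 2) (- c / 2) \<in> R \<inter> {z. 0 < Im z}"
    using z \<open>a < b\<close> by (auto simp: R_def)
  have hol_f: "f holomorphic_on R"
  \<comment> \<open>the line \<open>\<i> \<bullet> z = 0\<close> is the real axis; continuity across it is where \<open>zero\<close> enters\<close>
  proof (rule holomorphic_on_paste_across_line[OF \<open>open R\<close>, of \<i> _ 0])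
    have "G holomorphic_on R \<inter> {z. \<i> \<bullet> z < 0}"
      by (rule holomorphic_on_subset[OF hol]) (auto simp: R_def)
    then show "f holomorphic_on R \<inter> {z. \<i> \<bullet> z < 0}"
      by (rule holomorphic_transform) (simp add: f_def)
    show "f holomorphic_on R \<inter> {z. 0 < \<i> \<bullet> z}"
      by (rule holomorphic_transform[of "\<lambda>_. 0"]) (auto simp: f_def)
    show "continuous_on R f"
      unfolding f_def
    proof (rule continuous_on_cases_le)
      show "continuous_on {z \<in> R. Im z \<le> 0} G"
        by (rule continuous_on_subset[OF cont]) (auto simp: R_def)
      show "G w = 0" if "w \<in> R" "Im w = 0" for w
      proof -
        have "w = complex_of_real (Re w)"
          using \<open>Im w = 0\<close> by (simp add: complex_eq_iff)
        moreover have "Re w \<in> {a<..<b}"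
          using \<open>w \<in> R\<close> by (simp add: R_def)
        ultimately show ?thesis
          using zero by metis
      qed
    qed (intro continuous_intros)+
  qed simp
  have f_zero: "f w = 0" if "w \<in> R" for w
  proof (rule analytic_continuation_open[of "R \<inter> {z. 0 < Im z}" R f "\<lambda>_. 0"])
    show "open (R \<inter> {z. 0 < Im z})"
      using \<open>open R\<close> by (intro open_Int open_halfspace_Im_gt)
    show "connected R"
      using \<open>convex R\<close> by (rule convex_connected)
  qed (use above hol_f \<open>open R\<close> that in \<open>auto simp: f_def\<close>)
  define T where "T = {z. c < Im z \<and> Im z < 0}"
  have "convex T"
  proof -
    have "T = {z. c < Im z} \<inter> {z. Im z < 0}"
      by (auto simp: T_def)
    then show ?thesis
      by (simp add: convex_Int convex_halfspace_Im_gt convex_halfspace_Im_lt)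
  qed
  show ?thesis
  proof (rule analytic_continuation_open[of "R \<inter> {z. Im z < 0}" T G "\<lambda>_. 0"])
    show "open (R \<inter> {z. Im z < 0})"
      using \<open>open R\<close> by (intro open_Int open_halfspace_Im_lt)
    show "open T"
      unfolding T_def by (intro open_Collect_conj open_Collect_less continuous_intros)
    show "connected T"
      using \<open>convex T\<close> by (rule convex_connected)
    show "R \<inter> {z. Im z < 0} \<subseteq> T"
      by (auto simp: R_def T_def)
    show "G w = 0" if "w \<in> R \<inter> {z. Im z < 0}" for w
      using that f_zero[of w] by (simp add: f_def)
  qed (use below hol z in \<open>auto simp: T_def\<close>)
qed

lemma zero_on_edge_if_zero_on_edge_segment:
  fixes G :: "complex \<Rightarrow> complex" and a b c u :: real
  assumes cont: "continuous_on {z. c \<le> Im z \<and> Im z \<le> 0} G"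
    and hol: "G holomorphic_on {z. c < Im z \<and> Im z < 0}"
    and zero: "\<And>u. u \<in> {a<..<b} \<Longrightarrow> G (complex_of_real u) = 0"
    and "a < b" "c < 0"
  shows "G (complex_of_real u) = 0"
proof (rule continuous_constant_on_closure[where S = "{z. c < Im z \<and> Im z < 0}" and f = G])
  have "closure {z. c < Im z \<and> Im z < 0} \<subseteq> {z. c \<le> Im z \<and> Im z \<le> 0}"
    by (intro closure_minimal closed_Collect_conj closed_Collect_le continuous_intros) auto
  with cont show "continuous_on (closure {z. c < Im z \<and> Im z < 0}) G"
    by (rule continuous_on_subset)
  show "G z = 0" if "z \<in> {z. c < Im z \<and> Im z < 0}" for z
    using that by (intro zero_on_strip_if_zero_on_edge_segment[OF cont hol zero \<open>a < b\<close>]) auto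
  show "complex_of_real u \<in> closure {z. c < Im z \<and> Im z < 0}"
    unfolding closure_approachable
  proof (intro allI impI)
    fix e :: real assume "0 < e"
    then have "Complex u (max c (- e) / 2) \<in> {z. c < Im z \<and> Im z < 0}"
      and "dist (Complex u (max c (- e) / 2)) (complex_of_real u) < e"
      using \<open>c < 0\<close> by (auto simp: dist_norm complex_of_real_def cmod_def)
    then show "\<exists>y\<in>{z. c < Im z \<and> Im z < 0}. dist y (complex_of_real u) < e"
      by blast
  qed
qed

theorem lemma2p2:
  fixes M1 M2 :: "real measure" and l a b :: real
  assumes "real_distribution M1" and "real_distribution M2"
    and "l > 0"
    and "(\<integral>\<^sup>+ x. ennreal (exp (l * x)) \<partial>M1) < \<infinity>"
    and "(\<integral>\<^sup>+ x. ennreal (exp (l * x)) \<partial>M2) < \<infinity>"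
    and "a < b"
    and "\<And>u. u \<in> {a<..<b} \<Longrightarrow> char M1 u = char M2 u"
  shows "M1 = M2"
proof -
  interpret M1: exp_moment_distribution M1 l
    using assms(1,4) by (simp add: exp_moment_distribution_def exp_moment_distribution_axioms_def)
  interpret M2: exp_moment_distribution M2 l
    using assms(2,5) by (simp add: exp_moment_distribution_def exp_moment_distribution_axioms_def)
  define G where "G z = fourier_laplace M1 z - fourier_laplace M2 z" for z
  have "G (complex_of_real u) = 0" for u
  proof (rule zero_on_edge_if_zero_on_edge_segment[of "- l" G a b])
    show "continuous_on {z. - l \<le> Im z \<and> Im z \<le> 0} G"
      unfolding G_def
      by (intro continuous_on_diff M1.continuous_on_fourier_laplace M2.continuous_on_fourier_laplace)
    show "G holomorphic_on {z. - l < Im z \<and> Im z < 0}"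
      unfolding G_def
      by (intro holomorphic_on_diff M1.holomorphic_on_fourier_laplace M2.holomorphic_on_fourier_laplace)
    show "G (complex_of_real u) = 0" if "u \<in> {a<..<b}" for u
      using assms(7)[OF that] by (simp add: G_def fourier_laplace_of_real)
  qed (use assms(3,6) in auto)
  then have "char M1 = char M2"
    by (simp add: G_def fourier_laplace_of_real fun_eq_iff)
  then show ?thesis
    using Levy_uniqueness assms(1,2) by blast
qed

end
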